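(* For all $A,B\in\mathbb{P}(n)$, if $A\preceq B$ then $A\preceq A*B\preceq B$.
   Context: $\mathbb{P}(n)$ denotes the cone of $n\times n$ positive definite Hermitian matrices and $\preceq$ is the Löwner order: $A\preceq B$ iff $B-A$ is positive semidefinite. For $A,B\in\mathbb{P}(n)$, with $\lambda_{\max},\lambda_{\min}$ the largest and smallest eigenvalues of $BA^{-1}$, define $A*B=\frac{1}{\sqrt{\lambda_{\min}}+\sqrt{\lambda_{\max}}}\left(B+\sqrt{\lambda_{\min}\lambda_{\max}}\,A\right)$. *)

theory Defs
  imports "Jordan_Normal_Form.Matrix" "Jordan_Normal_Form.Char_Poly"
          "Jordan_Normal_Form.Gauss_Jordan_Elimination"
begin

definition conj_transpose :: "complex mat \<Rightarrow> complex mat" where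
  "conj_transpose A = mat (dim_col A) (dim_row A) (\<lambda>(i,j). cnj (A $$ (j,i)))"

definition hermitian :: "nat \<Rightarrow> complex mat \<Rightarrow> bool" where
  "hermitian n A \<longleftrightarrow> A \<in> carrier_mat n n \<and> conj_transpose A = A"

definition qform :: "complex mat \<Rightarrow> complex vec \<Rightarrow> complex" where
  "qform A v = (\<Sum>i<dim_vec v. \<Sum>j<dim_vec v. cnj (v $ i) * A $$ (i,j) * v $ j)"

definition psd :: "nat \<Rightarrow> complex mat \<Rightarrow> bool" where
  "psd n A \<longleftrightarrow> hermitian n A \<and> (\<forall>v \<in> carrier_vec n. Re (qform A v) \<ge> 0)"

definition posdef :: "nat \<Rightarrow> complex mat \<Rightarrow> bool" where
  "posdef n A \<longleftrightarrow> hermitian n A \<and> (\<forall>v \<in> carrier_vec n. v \<noteq> 0\<^sub>v n \<longrightarrow> Re (qform A v) > 0)"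

definition loewner :: "nat \<Rightarrow> complex mat \<Rightarrow> complex mat \<Rightarrow> bool" where
  "loewner n A B \<longleftrightarrow> psd n (B - A)"

definition mat_inv :: "complex mat \<Rightarrow> complex mat" where
  "mat_inv A = the (mat_inverse A)"

(* largest / smallest eigenvalue of a matrix whose eigenvalues are all real *)
definition lam_max :: "complex mat \<Rightarrow> real" where
  "lam_max M = Max {x::real. eigenvalue M (complex_of_real x)}"

definition lam_min :: "complex mat \<Rightarrow> real" where
  "lam_min M = Min {x::real. eigenvalue M (complex_of_real x)}"

definition star_op :: "complex mat \<Rightarrow> complex mat \<Rightarrow> complex mat" where
  "star_op A B =
     (let M = B * mat_inv A; lmin = lam_min M; lmax = lam_max M in
      complex_of_real (1 / (sqrt lmin + sqrt lmax)) \<cdot>\<^sub>m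
        (B + complex_of_real (sqrt (lmin * lmax)) \<cdot>\<^sub>m A))"

end

theory Submission
  imports Defs
begin

(* Let mu be the largest real with mu A <= B in the Loewner order. Then det (B - mu A) = 0,
   i.e. mu is an eigenvalue of B A^-1, for otherwise the positive semidefinite, nonsingular
   matrix B - mu A would dominate e A for some e > 0. On the other hand every real eigenvalue
   x of B A^-1 satisfies v*Bv = x v*Av for some nonzero v, so x >= mu and, as A <= B, x >= 1.
   Hence lambda_min = mu >= 1, and with a = sqrt lambda_min <= b = sqrt lambda_max the claim
   reduces to x <= (y + a b x) / (a + b) <= y for 0 <= x <= y and a^2 x <= y, applied to
   x = v*Av and y = v*Bv. *)

lemma hermitian_entry:
  assumes "hermitian n X" "i < n" "j < n"
  shows "X $$ (j,i) = cnj (X $$ (i,j))"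
proof -
  have X: "X \<in> carrier_mat n n" and eq: "conj_transpose X = X"
    using assms(1) by (auto simp: hermitian_def)
  have "X $$ (j,i) = conj_transpose X $$ (j,i)" using eq by simp
  also have "\<dots> = cnj (X $$ (i,j))" using X assms(2,3) by (simp add: conj_transpose_def)
  finally show ?thesis .
qed

lemma conj_transpose_add:
  "X \<in> carrier_mat n m \<Longrightarrow> Y \<in> carrier_mat n m \<Longrightarrow>
    conj_transpose (X + Y) = conj_transpose X + conj_transpose Y"
  by (auto simp: conj_transpose_def)

lemma conj_transpose_minus:
  "X \<in> carrier_mat n m \<Longrightarrow> Y \<in> carrier_mat n m \<Longrightarrow>
    conj_transpose (X - Y) = conj_transpose X - conj_transpose Y"
  by (auto simp: conj_transpose_def)

lemma conj_transpose_smult: "conj_transpose (c \<cdot>\<^sub>m X) = cnj c \<cdot>\<^sub>m conj_transpose X"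
  by (auto simp: conj_transpose_def)

lemma hermitian_add: "hermitian n X \<Longrightarrow> hermitian n Y \<Longrightarrow> hermitian n (X + Y)"
  by (auto simp: hermitian_def conj_transpose_add)

lemma hermitian_minus: "hermitian n X \<Longrightarrow> hermitian n Y \<Longrightarrow> hermitian n (X - Y)"
  by (auto simp: hermitian_def conj_transpose_minus)

lemma hermitian_smult_real: "hermitian n X \<Longrightarrow> hermitian n (complex_of_real r \<cdot>\<^sub>m X)"
  by (auto simp: hermitian_def conj_transpose_smult)

definition sesq :: "nat \<Rightarrow> complex mat \<Rightarrow> complex vec \<Rightarrow> complex vec \<Rightarrow> complex" where
  "sesq n X w v = (\<Sum>i<n. \<Sum>j<n. cnj (w $ i) * X $$ (i,j) * v $ j)"

lemma qform_eq_sesq: "v \<in> carrier_vec n \<Longrightarrow> qform X v = sesq n X v v"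
  by (simp add: qform_def sesq_def)

lemma sesq_add:
  "X \<in> carrier_mat n n \<Longrightarrow> Y \<in> carrier_mat n n \<Longrightarrow> sesq n (X + Y) w v = sesq n X w v + sesq n Y w v"
  unfolding sesq_def sum.distrib[symmetric] by (intro sum.cong refl) (simp add: algebra_simps)

lemma sesq_minus:
  "X \<in> carrier_mat n n \<Longrightarrow> Y \<in> carrier_mat n n \<Longrightarrow> sesq n (X - Y) w v = sesq n X w v - sesq n Y w v"
  unfolding sesq_def sum_subtractf[symmetric] by (intro sum.cong refl) (simp add: algebra_simps)

lemma sesq_smult: "X \<in> carrier_mat n n \<Longrightarrow> sesq n (c \<cdot>\<^sub>m X) w v = c * sesq n X w v"
  unfolding sesq_def sum_distrib_left by (intro sum.cong refl) (simp add: algebra_simps)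

lemma sesq_mult_mat_vec:
  assumes "X \<in> carrier_mat n n" "v \<in> carrier_vec n"
  shows "sesq n X w v = (\<Sum>i<n. cnj (w $ i) * (X *\<^sub>v v) $ i)"
  unfolding sesq_def
proof (rule sum.cong[OF refl])
  fix i assume "i \<in> {..<n}"
  then have row: "(X *\<^sub>v v) $ i = (\<Sum>j<n. X $$ (i,j) * v $ j)"
    using assms by (simp add: scalar_prod_def lessThan_atLeast0)
  show "(\<Sum>j<n. cnj (w $ i) * X $$ (i,j) * v $ j) = cnj (w $ i) * (X *\<^sub>v v) $ i"
    unfolding row by (simp add: sum_distrib_left mult.assoc)
qed

lemma sesq_conj_swap:
  assumes "hermitian n X"
  shows "sesq n X v w = cnj (sesq n X w v)"
proof -
  have "cnj (sesq n X w v) = (\<Sum>i<n. \<Sum>j<n. cnj (v $ j) * X $$ (j,i) * w $ i)"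
    unfolding sesq_def cnj_sum
  proof (intro sum.cong refl)
    fix i j assume "i \<in> {..<n}" "j \<in> {..<n}"
    then have "X $$ (j,i) = cnj (X $$ (i,j))" by (intro hermitian_entry[OF assms]) auto
    then show "cnj (cnj (w $ i) * X $$ (i,j) * v $ j) = cnj (v $ j) * X $$ (j,i) * w $ i"
      by (simp add: mult.commute mult.left_commute)
  qed
  also have "\<dots> = sesq n X v w" unfolding sesq_def by (rule sum.swap)
  finally show ?thesis by simp
qed

lemma sesq_diff_smult:
  assumes "v \<in> carrier_vec n" "w \<in> carrier_vec n"
  shows "sesq n X (v - c \<cdot>\<^sub>v w) (v - c \<cdot>\<^sub>v w) =
    sesq n X v v - c * sesq n X v w - cnj c * sesq n X w v + cnj c * c * sesq n X w w"
proof -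
  have "sesq n X (v - c \<cdot>\<^sub>v w) (v - c \<cdot>\<^sub>v w) = (\<Sum>i<n. \<Sum>j<n.
      cnj (v $ i) * X $$ (i,j) * v $ j - c * (cnj (v $ i) * X $$ (i,j) * w $ j)
      - (cnj c * (cnj (w $ i) * X $$ (i,j) * v $ j) - cnj c * c * (cnj (w $ i) * X $$ (i,j) * w $ j)))"
    unfolding sesq_def using assms by (intro sum.cong refl) (simp add: ring_distribs)
  then show ?thesis unfolding sesq_def by (simp add: sum_subtractf sum_distrib_left)
qed

definition vec_norm_sq :: "complex vec \<Rightarrow> real" where
  "vec_norm_sq v = (\<Sum>i<dim_vec v. (cmod (v $ i))\<^sup>2)"

lemma vec_norm_sq_nonneg: "0 \<le> vec_norm_sq v"
  unfolding vec_norm_sq_def by (intro sum_nonneg) auto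

lemma cmod_index_sq_le_vec_norm_sq: "i < dim_vec v \<Longrightarrow> (cmod (v $ i))\<^sup>2 \<le> vec_norm_sq v"
  unfolding vec_norm_sq_def by (intro member_le_sum) auto

lemma sesq_mult_mat_vec_self:
  assumes "X \<in> carrier_mat n n" "v \<in> carrier_vec n"
  shows "sesq n X (X *\<^sub>v v) v = complex_of_real (vec_norm_sq (X *\<^sub>v v))"
proof -
  have dim: "dim_vec (X *\<^sub>v v) = n" using assms by simp
  show ?thesis
    unfolding sesq_mult_mat_vec[OF assms] vec_norm_sq_def of_real_sum dim
    by (intro sum.cong refl) (metis complex_norm_square mult.commute)
qed

lemma sesq_self_bound:
  assumes "X \<in> carrier_mat n n"
  shows "\<exists>K>0. \<forall>v\<in>carrier_vec n. cmod (sesq n X v v) \<le> K * vec_norm_sq v"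
proof -
  define S where "S = (\<Sum>i<n. \<Sum>j<n. cmod (X $$ (i,j)))"
  have "cmod (sesq n X v v) \<le> S * vec_norm_sq v" if v: "v \<in> carrier_vec n" for v
  proof -
    have entry: "cmod (cnj (v $ i) * X $$ (i,j) * v $ j) \<le> cmod (X $$ (i,j)) * vec_norm_sq v"
      if "i < n" "j < n" for i j
    proof -
      have "(cmod (v $ i))\<^sup>2 \<le> vec_norm_sq v" "(cmod (v $ j))\<^sup>2 \<le> vec_norm_sq v"
        using v that by (auto intro: cmod_index_sq_le_vec_norm_sq)
      moreover have "2 * (cmod (v $ i) * cmod (v $ j)) \<le> (cmod (v $ i))\<^sup>2 + (cmod (v $ j))\<^sup>2"
        using sum_squares_bound[of "cmod (v $ i)" "cmod (v $ j)"] by (simp add: mult.assoc)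
      ultimately have "cmod (v $ i) * cmod (v $ j) \<le> vec_norm_sq v" by linarith
      then have "cmod (X $$ (i,j)) * (cmod (v $ i) * cmod (v $ j)) \<le> cmod (X $$ (i,j)) * vec_norm_sq v"
        by (rule mult_left_mono) simp
      then show ?thesis by (simp add: norm_mult ac_simps)
    qed
    have "cmod (sesq n X v v) \<le> (\<Sum>i<n. \<Sum>j<n. cmod (cnj (v $ i) * X $$ (i,j) * v $ j))"
      unfolding sesq_def by (rule order_trans[OF norm_sum sum_mono[OF norm_sum]])
    also have "\<dots> \<le> (\<Sum>i<n. \<Sum>j<n. cmod (X $$ (i,j)) * vec_norm_sq v)"
      by (intro sum_mono entry) auto
    also have "\<dots> = S * vec_norm_sq v" by (simp add: S_def sum_distrib_right)
    finally show ?thesis .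
  qed
  moreover have "S * vec_norm_sq v \<le> (S + 1) * vec_norm_sq v" for v
    using vec_norm_sq_nonneg[of v] by (simp add: algebra_simps)
  moreover have "0 < S + 1" unfolding S_def by (smt (verit) sum_nonneg norm_ge_zero)
  ultimately show ?thesis by (meson order_trans)
qed

lemma mult_mat_vec_norm_sq_bound:
  assumes "D \<in> carrier_mat n n"
  shows "\<exists>K>0. \<forall>v\<in>carrier_vec n. vec_norm_sq (D *\<^sub>v v) \<le> K * vec_norm_sq v"
proof -
  define R where "R i = (\<Sum>j<n. cmod (D $$ (i,j)))" for i
  have "vec_norm_sq (D *\<^sub>v v) \<le> (\<Sum>i<n. (R i)\<^sup>2) * vec_norm_sq v" if v: "v \<in> carrier_vec n" for v
  proof -
    have row: "(cmod ((D *\<^sub>v v) $ i))\<^sup>2 \<le> (R i)\<^sup>2 * vec_norm_sq v" if i: "i < n" for i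
    proof -
      have "cmod ((D *\<^sub>v v) $ i) = cmod (\<Sum>j<n. D $$ (i,j) * v $ j)"
        using i assms v by (simp add: scalar_prod_def lessThan_atLeast0)
      also have "\<dots> \<le> (\<Sum>j<n. cmod (D $$ (i,j)) * cmod (v $ j))"
        by (rule order_trans[OF norm_sum]) (simp add: norm_mult)
      also have "\<dots> \<le> (\<Sum>j<n. cmod (D $$ (i,j)) * sqrt (vec_norm_sq v))"
      proof (intro sum_mono mult_left_mono)
        fix j assume "j \<in> {..<n}"
        then have "(cmod (v $ j))\<^sup>2 \<le> vec_norm_sq v" using v by (auto intro: cmod_index_sq_le_vec_norm_sq)
        then show "cmod (v $ j) \<le> sqrt (vec_norm_sq v)" by (simp add: real_le_rsqrt)
      qed auto
      also have "\<dots> = R i * sqrt (vec_norm_sq v)" by (simp add: R_def sum_distrib_right)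
      finally have "(cmod ((D *\<^sub>v v) $ i))\<^sup>2 \<le> (R i * sqrt (vec_norm_sq v))\<^sup>2"
        by (intro power_mono) auto
      then show ?thesis using vec_norm_sq_nonneg[of v] by (simp add: power_mult_distrib)
    qed
    have "vec_norm_sq (D *\<^sub>v v) = (\<Sum>i<n. (cmod ((D *\<^sub>v v) $ i))\<^sup>2)"
      using assms by (simp add: vec_norm_sq_def)
    also have "\<dots> \<le> (\<Sum>i<n. (R i)\<^sup>2 * vec_norm_sq v)" by (intro sum_mono row) auto
    also have "\<dots> = (\<Sum>i<n. (R i)\<^sup>2) * vec_norm_sq v" by (simp add: sum_distrib_right)
    finally show ?thesis .
  qed
  moreover have "(\<Sum>i<n. (R i)\<^sup>2) * vec_norm_sq v \<le> ((\<Sum>i<n. (R i)\<^sup>2) + 1) * vec_norm_sq v" for v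
    using vec_norm_sq_nonneg[of v] by (simp add: algebra_simps)
  moreover have "0 < (\<Sum>i<n. (R i)\<^sup>2) + 1" by (smt (verit) sum_nonneg zero_le_power2)
  ultimately show ?thesis by (meson order_trans)
qed

lemma posdef_imp_psd:
  assumes "posdef n A"
  shows "psd n A"
proof -
  have "0 \<le> Re (qform A v)" if "v \<in> carrier_vec n" for v
  proof (cases "v = 0\<^sub>v n")
    case True
    then show ?thesis by (simp add: qform_def)
  next
    case False
    then show ?thesis using assms that by (auto simp: posdef_def intro: less_imp_le)
  qed
  with assms show ?thesis by (simp add: posdef_def psd_def)
qed

lemma posdef_det_nonzero:
  assumes "posdef n A"
  shows "det A \<noteq> 0"
proof
  assume "det A = 0"
  have A: "A \<in> carrier_mat n n" using assms by (simp add: posdef_def hermitian_def)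
  obtain v where v: "v \<in> carrier_vec n" "v \<noteq> 0\<^sub>v n" and Av: "A *\<^sub>v v = 0\<^sub>v n"
    using \<open>det A = 0\<close> det_0_iff_vec_prod_zero[OF A] by blast
  have "qform A v = 0" unfolding qform_eq_sesq[OF v(1)] sesq_mult_mat_vec[OF A v(1)] Av by simp
  with assms v show False by (auto simp: posdef_def)
qed

lemma mat_inv_correct:
  assumes A: "A \<in> carrier_mat n n" and "det A \<noteq> 0"
  shows "mat_inv A \<in> carrier_mat n n \<and> A * mat_inv A = 1\<^sub>m n \<and> mat_inv A * A = 1\<^sub>m n"
proof -
  have "A \<in> Units (ring_mat TYPE(complex) n n)" by (rule det_non_zero_imp_unit[OF A assms(2)])
  then obtain D where "mat_inverse A = Some D"
    using mat_inverse(1)[OF A, where b = n] by (cases "mat_inverse A") auto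
  then show ?thesis using mat_inverse(2)[OF A] by (auto simp: mat_inv_def)
qed

lemma loewner_iff_qform:
  assumes "hermitian n A" "hermitian n B"
  shows "loewner n A B \<longleftrightarrow> (\<forall>v\<in>carrier_vec n. Re (qform A v) \<le> Re (qform B v))"
proof -
  have "A \<in> carrier_mat n n" "B \<in> carrier_mat n n" using assms by (auto simp: hermitian_def)
  then have "qform (B - A) v = qform B v - qform A v" if "v \<in> carrier_vec n" for v
    using that by (simp add: qform_eq_sesq sesq_minus)
  then show ?thesis using hermitian_minus[OF assms(2,1)] by (simp add: loewner_def psd_def)
qed

lemma psd_norm_sq_mult_le:
  assumes "psd n C"
  shows "\<exists>K>0. \<forall>v\<in>carrier_vec n. vec_norm_sq (C *\<^sub>v v) \<le> K * Re (qform C v)"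
proof -
  have C: "C \<in> carrier_mat n n" and hC: "hermitian n C" using assms by (auto simp: psd_def hermitian_def)
  obtain K where K: "K > 0" and bound: "\<forall>v\<in>carrier_vec n. cmod (sesq n C v v) \<le> K * vec_norm_sq v"
    using sesq_self_bound[OF C] by blast
  have "vec_norm_sq (C *\<^sub>v v) \<le> K * Re (qform C v)" if v: "v \<in> carrier_vec n" for v
  proof -
    define w where "w = C *\<^sub>v v"
    define N where "N = vec_norm_sq w"
    have w: "w \<in> carrier_vec n" using C v by (simp add: w_def)
    have wv: "sesq n C w v = complex_of_real N"
      unfolding w_def N_def by (rule sesq_mult_mat_vec_self[OF C v])
    have vw: "sesq n C v w = complex_of_real N" using sesq_conj_swap[OF hC, of v w] wv by simp
    have ww: "Re (sesq n C w w) \<le> K * N"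
      using bound w complex_Re_le_cmod order_trans unfolding N_def by blast
    (* Expand 0 <= q_C (v - w / K): both cross terms equal |C v|^2. *)
    define c where "c = complex_of_real (1 / K)"
    have u: "v - c \<cdot>\<^sub>v w \<in> carrier_vec n" using v w by simp
    have "0 \<le> Re (qform C (v - c \<cdot>\<^sub>v w))"
      using assms u by (simp add: psd_def)
    also have "\<dots> = Re (sesq n C v v) - 2 * N / K + (1 / K)\<^sup>2 * Re (sesq n C w w)"
      unfolding qform_eq_sesq[OF u] sesq_diff_smult[OF v w] wv vw by (simp add: c_def power2_eq_square)
    also have "\<dots> \<le> Re (sesq n C v v) - 2 * N / K + (1 / K)\<^sup>2 * (K * N)"
      using ww by (simp add: mult_left_mono)
    also have "\<dots> = Re (qform C v) - N / K"
      using K v by (simp add: qform_eq_sesq power2_eq_square field_simps)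
    finally show ?thesis using K unfolding N_def w_def by (simp add: field_simps)
  qed
  with K show ?thesis by blast
qed

lemma norm_sq_le_mult_nonsingular:
  assumes C: "C \<in> carrier_mat n n" and "det C \<noteq> 0"
  shows "\<exists>K>0. \<forall>v\<in>carrier_vec n. vec_norm_sq v \<le> K * vec_norm_sq (C *\<^sub>v v)"
proof -
  have D: "mat_inv C \<in> carrier_mat n n" and DC: "mat_inv C * C = 1\<^sub>m n"
    using mat_inv_correct[OF assms] by auto
  obtain K where "K > 0" "\<forall>w\<in>carrier_vec n. vec_norm_sq (mat_inv C *\<^sub>v w) \<le> K * vec_norm_sq w"
    using mult_mat_vec_norm_sq_bound[OF D] by blast
  moreover have "v = mat_inv C *\<^sub>v (C *\<^sub>v v)" if "v \<in> carrier_vec n" for v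
    using that C D DC by (simp add: assoc_mult_mat_vec[symmetric, of _ n n C n v])
  ultimately show ?thesis using C by (metis mult_mat_vec_carrier)
qed

lemma psd_nonsingular_dominates:
  assumes "psd n C" "det C \<noteq> 0" "A \<in> carrier_mat n n"
  shows "\<exists>e>0. \<forall>v\<in>carrier_vec n. e * Re (qform A v) \<le> Re (qform C v)"
proof -
  have C: "C \<in> carrier_mat n n" using assms(1) by (simp add: psd_def hermitian_def)
  obtain K1 where K1: "K1 > 0" "\<forall>v\<in>carrier_vec n. vec_norm_sq (C *\<^sub>v v) \<le> K1 * Re (qform C v)"
    using psd_norm_sq_mult_le[OF assms(1)] by blast
  obtain K2 where K2: "K2 > 0" "\<forall>v\<in>carrier_vec n. vec_norm_sq v \<le> K2 * vec_norm_sq (C *\<^sub>v v)"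
    using norm_sq_le_mult_nonsingular[OF C assms(2)] by blast
  obtain K3 where K3: "K3 > 0" "\<forall>v\<in>carrier_vec n. cmod (sesq n A v v) \<le> K3 * vec_norm_sq v"
    using sesq_self_bound[OF assms(3)] by blast
  have "Re (qform A v) \<le> (K3 * K2 * K1) * Re (qform C v)" if v: "v \<in> carrier_vec n" for v
  proof -
    have "Re (qform A v) \<le> K3 * vec_norm_sq v"
      using K3(2) v complex_Re_le_cmod order_trans by (metis qform_eq_sesq)
    also have "\<dots> \<le> K3 * (K2 * vec_norm_sq (C *\<^sub>v v))"
      using K2 K3(1) v by (simp add: mult_left_mono)
    also have "\<dots> \<le> K3 * (K2 * (K1 * Re (qform C v)))"
      using K1 K2(1) K3(1) v by (simp add: mult_left_mono)
    finally show ?thesis by (simp add: ac_simps)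
  qed
  then show ?thesis using K1(1) K2(1) K3(1)
    by (intro exI[of _ "1 / (K3 * K2 * K1)"]) (auto simp: field_simps)
qed

lemma qform_diff_smult:
  assumes "A \<in> carrier_mat n n" "B \<in> carrier_mat n n" "v \<in> carrier_vec n"
  shows "Re (qform (B - complex_of_real c \<cdot>\<^sub>m A) v) = Re (qform B v) - c * Re (qform A v)"
  using assms by (simp add: qform_eq_sesq sesq_minus sesq_smult)

lemma eigenvalue_mult_mat_inv_iff:
  assumes A: "A \<in> carrier_mat n n" and B: "B \<in> carrier_mat n n" and "det A \<noteq> 0"
  shows "eigenvalue (B * mat_inv A) k \<longleftrightarrow> det (B - k \<cdot>\<^sub>m A) = 0"
proof -
  define M where "M = B * mat_inv A"
  have Ai: "mat_inv A \<in> carrier_mat n n" "mat_inv A * A = 1\<^sub>m n"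
    using mat_inv_correct[OF A assms(3)] by auto
  have M: "M \<in> carrier_mat n n" using B Ai by (simp add: M_def)
  have MA: "M * A = B"
    using assoc_mult_mat[OF B Ai(1) A] B Ai(2) by (simp add: M_def)
  have "char_matrix M k * A = M * A + ((- k) \<cdot>\<^sub>m 1\<^sub>m n) * A"
    using M A unfolding char_matrix_def by (simp add: add_mult_distrib_mat[of M n n _ A n])
  also have "\<dots> = B - k \<cdot>\<^sub>m A"
    unfolding MA using A B by (auto simp: mult_smult_assoc_mat[of _ n n A n] intro!: eq_matI)
  finally have "char_matrix M k * A = B - k \<cdot>\<^sub>m A" .
  then have "det (B - k \<cdot>\<^sub>m A) = det (char_matrix M k) * det A"
    using M A by (metis char_matrix_closed det_mult)
  then show ?thesis using eigenvalue_det[OF M] assms(3) by (simp add: M_def)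
qed

lemma finite_real_eigenvalues:
  assumes M: "M \<in> carrier_mat n n"
  shows "finite {x::real. eigenvalue M (complex_of_real x)}"
proof -
  have "char_poly M \<noteq> 0" using degree_monic_char_poly[OF M] by auto
  then have "finite {z. poly (char_poly M) z = 0}" by (rule poly_roots_finite)
  moreover have "{x::real. eigenvalue M (complex_of_real x)} \<subseteq> Re ` {z. poly (char_poly M) z = 0}"
    using eigenvalue_root_char_poly[OF M] by (auto intro: image_eqI[where x = "complex_of_real _"])
  ultimately show ?thesis by (meson finite_imageI finite_subset)
qed

lemma generalized_eigenvalue_ge:
  assumes A: "posdef n A" and B: "B \<in> carrier_mat n n"
    and dom: "\<forall>v\<in>carrier_vec n. c * Re (qform A v) \<le> Re (qform B v)"
    and det: "det (B - complex_of_real x \<cdot>\<^sub>m A) = 0"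
  shows "c \<le> x"
proof -
  have A_carrier: "A \<in> carrier_mat n n" using A by (simp add: posdef_def hermitian_def)
  then have C: "B - complex_of_real x \<cdot>\<^sub>m A \<in> carrier_mat n n" by (simp add: minus_carrier_mat)
  obtain u where u: "u \<in> carrier_vec n" "u \<noteq> 0\<^sub>v n" and Cu: "(B - complex_of_real x \<cdot>\<^sub>m A) *\<^sub>v u = 0\<^sub>v n"
    using det det_0_iff_vec_prod_zero[OF C] by blast
  have "qform (B - complex_of_real x \<cdot>\<^sub>m A) u = 0"
    unfolding qform_eq_sesq[OF u(1)] sesq_mult_mat_vec[OF C u(1)] Cu by simp
  then have "Re (qform B u) = x * Re (qform A u)"
    using qform_diff_smult[OF A_carrier B u(1), of x] by simp
  moreover have "0 < Re (qform A u)" using A u by (simp add: posdef_def)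
  ultimately show ?thesis using dom u(1) by (metis mult_le_cancel_right_pos)
qed

lemma Sup_dominated_mem:
  fixes f g :: "'a \<Rightarrow> real" and V :: "'a set"
  defines "T \<equiv> {s. \<forall>v\<in>V. s * f v \<le> g v}"
  assumes f: "\<forall>v\<in>V. 0 \<le> f v" and "s \<in> T" and "bdd_above T"
  shows "Sup T \<in> T"
proof -
  have "Sup T * f v \<le> g v" if v: "v \<in> V" for v
  proof (cases "f v = 0")
    case True
    then show ?thesis using \<open>s \<in> T\<close> v unfolding T_def by force
  next
    case False
    then have pos: "0 < f v" using f v by (simp add: order_less_le)
    have "Sup T \<le> g v / f v"
      using \<open>s \<in> T\<close> v pos by (intro cSup_least) (auto simp: T_def le_divide_eq)
    then show ?thesis using pos by (simp add: le_divide_eq)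
  qed
  then show ?thesis by (simp add: T_def)
qed

lemma exists_dominated_generalized_eigenvalue:
  assumes A: "posdef n A" and B: "psd n B" and "0 < n"
  shows "\<exists>\<mu>. det (B - complex_of_real \<mu> \<cdot>\<^sub>m A) = 0 \<and>
    (\<forall>v\<in>carrier_vec n. \<mu> * Re (qform A v) \<le> Re (qform B v))"
proof -
  have hA: "hermitian n A" and hB: "hermitian n B" using A B by (auto simp: posdef_def psd_def)
  then have A_carrier: "A \<in> carrier_mat n n" and B_carrier: "B \<in> carrier_mat n n"
    by (auto simp: hermitian_def)
  define T where "T = {s. \<forall>v\<in>carrier_vec n. s * Re (qform A v) \<le> Re (qform B v)}"
  have "0 \<in> T" using B by (simp add: T_def psd_def)
  have "bdd_above T"
  proof
    define e :: "complex vec" where "e = unit_vec n 0"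
    have e: "e \<in> carrier_vec n" "e \<noteq> 0\<^sub>v n" using \<open>0 < n\<close> by (auto simp: e_def)
    then have pos: "0 < Re (qform A e)" using A by (simp add: posdef_def)
    fix s assume "s \<in> T"
    then have "s * Re (qform A e) \<le> Re (qform B e)" using e by (simp add: T_def)
    then show "s \<le> Re (qform B e) / Re (qform A e)" using pos by (simp add: le_divide_eq)
  qed
  define \<mu> where "\<mu> = Sup T"
  have "\<mu> \<in> T"
    unfolding \<mu>_def T_def
    by (rule Sup_dominated_mem[where s = 0])
      (use posdef_imp_psd[OF A] \<open>0 \<in> T\<close> \<open>bdd_above T\<close> in \<open>auto simp: psd_def T_def\<close>)
  have "det (B - complex_of_real \<mu> \<cdot>\<^sub>m A) = 0"
  proof (rule ccontr)
    assume det: "det (B - complex_of_real \<mu> \<cdot>\<^sub>m A) \<noteq> 0"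
    have "psd n (B - complex_of_real \<mu> \<cdot>\<^sub>m A)"
      using \<open>\<mu> \<in> T\<close> hA hB qform_diff_smult[OF A_carrier B_carrier]
      by (simp add: psd_def T_def hermitian_minus hermitian_smult_real)
    then obtain e where "e > 0"
      and e: "\<forall>v\<in>carrier_vec n. e * Re (qform A v) \<le> Re (qform (B - complex_of_real \<mu> \<cdot>\<^sub>m A) v)"
      using psd_nonsingular_dominates[OF _ det A_carrier] by blast
    have "\<mu> + e \<in> T" unfolding T_def
    proof (intro CollectI ballI)
      fix v :: "complex vec" assume v: "v \<in> carrier_vec n"
      show "(\<mu> + e) * Re (qform A v) \<le> Re (qform B v)"
        using bspec[OF e v] qform_diff_smult[OF A_carrier B_carrier v, of \<mu>] by (simp add: distrib_right)
    qed
    then have "\<mu> + e \<le> \<mu>" unfolding \<mu>_def by (rule cSup_upper[OF _ \<open>bdd_above T\<close>])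
    with \<open>e > 0\<close> show False by simp
  qed
  with \<open>\<mu> \<in> T\<close> show ?thesis by (auto simp: T_def)
qed

lemma lam_min_mult_mat_inv:
  assumes A: "posdef n A" and B: "posdef n B" and AB: "loewner n A B" and "0 < n"
  defines "M \<equiv> B * mat_inv A"
  shows "1 \<le> lam_min M" and "lam_min M \<le> lam_max M"
    and "\<forall>v\<in>carrier_vec n. lam_min M * Re (qform A v) \<le> Re (qform B v)"
proof -
  have hA: "hermitian n A" and hB: "hermitian n B" using A B by (auto simp: posdef_def)
  then have A_carrier: "A \<in> carrier_mat n n" and B_carrier: "B \<in> carrier_mat n n"
    by (auto simp: hermitian_def)
  have detA: "det A \<noteq> 0" by (rule posdef_det_nonzero[OF A])
  define S where "S = {x::real. eigenvalue M (complex_of_real x)}"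
  have "M \<in> carrier_mat n n"
    using B_carrier mat_inv_correct[OF A_carrier detA] by (simp add: M_def)
  then have "finite S" unfolding S_def by (rule finite_real_eigenvalues)
  have S_iff: "x \<in> S \<longleftrightarrow> det (B - complex_of_real x \<cdot>\<^sub>m A) = 0" for x
    unfolding S_def M_def using eigenvalue_mult_mat_inv_iff[OF A_carrier B_carrier detA] by simp
  obtain \<mu> where "\<mu> \<in> S" and dom: "\<forall>v\<in>carrier_vec n. \<mu> * Re (qform A v) \<le> Re (qform B v)"
    using exists_dominated_generalized_eigenvalue[OF A posdef_imp_psd[OF B] \<open>0 < n\<close>] S_iff by blast
  have "\<forall>v\<in>carrier_vec n. 1 * Re (qform A v) \<le> Re (qform B v)"
    using AB loewner_iff_qform[OF hA hB] by simp
  then have ge: "\<mu> \<le> x \<and> 1 \<le> x" if "x \<in> S" for x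
    using generalized_eigenvalue_ge[OF A B_carrier _] dom that S_iff by blast
  have "lam_min M = \<mu>"
    unfolding lam_min_def S_def[symmetric] using \<open>finite S\<close> \<open>\<mu> \<in> S\<close> ge by (intro Min_eqI) auto
  moreover have "\<mu> \<le> lam_max M"
    unfolding lam_max_def S_def[symmetric] using \<open>finite S\<close> \<open>\<mu> \<in> S\<close> by simp
  ultimately show "1 \<le> lam_min M" "lam_min M \<le> lam_max M"
    and "\<forall>v\<in>carrier_vec n. lam_min M * Re (qform A v) \<le> Re (qform B v)"
    using ge[OF \<open>\<mu> \<in> S\<close>] dom by auto
qed

lemma star_mean_bounds:
  fixes a b x y :: real
  assumes "1 \<le> a" "a \<le> b" "0 \<le> x" "x \<le> y" "a\<^sup>2 * x \<le> y"
  shows "x \<le> (y + a * b * x) / (a + b)" and "(y + a * b * x) / (a + b) \<le> y"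
proof -
  have "0 < a + b" using assms by simp
  have "0 \<le> (a - 1) * (b - 1) * x" using assms by simp
  then have "x * (a + b) \<le> y + a * b * x" using assms by (simp add: algebra_simps)
  then show "x \<le> (y + a * b * x) / (a + b)" using \<open>0 < a + b\<close> by (simp add: le_divide_eq)
  have "0 \<le> (a + b - 1) * (y - a\<^sup>2 * x)" using assms by simp
  moreover have "0 \<le> a * (a + b) * (a - 1) * x" using assms by simp
  ultimately have "y + a * b * x \<le> y * (a + b)" by (simp add: algebra_simps power2_eq_square)
  then show "(y + a * b * x) / (a + b) \<le> y" using \<open>0 < a + b\<close> by (simp add: divide_le_eq)
qed

lemma hermitian_star_op: "hermitian n A \<Longrightarrow> hermitian n B \<Longrightarrow> hermitian n (star_op A B)"
  unfolding star_op_def Let_def by (intro hermitian_smult_real hermitian_add)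

lemma qform_star_op:
  assumes "A \<in> carrier_mat n n" "B \<in> carrier_mat n n" "v \<in> carrier_vec n"
  defines "a \<equiv> sqrt (lam_min (B * mat_inv A))" and "b \<equiv> sqrt (lam_max (B * mat_inv A))"
  shows "Re (qform (star_op A B) v) = (Re (qform B v) + a * b * Re (qform A v)) / (a + b)"
  using assms by (simp add: star_op_def Let_def real_sqrt_mult qform_eq_sesq sesq_smult sesq_add)

lemma qform_star_op_between:
  assumes A: "posdef n A" and B: "posdef n B" and AB: "loewner n A B" and v: "v \<in> carrier_vec n"
  shows "Re (qform A v) \<le> Re (qform (star_op A B) v) \<and> Re (qform (star_op A B) v) \<le> Re (qform B v)"
proof (cases "n = 0")
  case True
  then have "dim_vec v = 0" using v by simp
  then show ?thesis by (simp add: qform_def)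
next
  case False
  define a where "a = sqrt (lam_min (B * mat_inv A))"
  define b where "b = sqrt (lam_max (B * mat_inv A))"
  have hA: "hermitian n A" and hB: "hermitian n B" using A B by (auto simp: posdef_def)
  then have "A \<in> carrier_mat n n" "B \<in> carrier_mat n n" by (auto simp: hermitian_def)
  note star = qform_star_op[OF this v]
  have "0 < n" using False by simp
  note lam = lam_min_mult_mat_inv[OF A B AB this]
  have "1 \<le> a" unfolding a_def using lam(1) by simp
  moreover have "a \<le> b" unfolding a_def b_def using lam(2) by (rule real_sqrt_le_mono)
  moreover have "a\<^sup>2 * Re (qform A v) \<le> Re (qform B v)"
    unfolding a_def using lam(1) bspec[OF lam(3) v] by simp
  moreover have "0 \<le> Re (qform A v)" and "Re (qform A v) \<le> Re (qform B v)"
    using posdef_imp_psd[OF A] AB v loewner_iff_qform[OF hA hB] by (auto simp: psd_def)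
  ultimately show ?thesis unfolding star a_def[symmetric] b_def[symmetric] by (metis star_mean_bounds)
qed

theorem proposition3:
  fixes n :: nat and A B :: "complex mat"
  assumes "posdef n A" and "posdef n B" and "loewner n A B"
  shows "loewner n A (star_op A B) \<and> loewner n (star_op A B) B"
proof -
  have hA: "hermitian n A" and hB: "hermitian n B" using assms by (auto simp: posdef_def)
  have hS: "hermitian n (star_op A B)" by (rule hermitian_star_op[OF hA hB])
  show ?thesis
    using qform_star_op_between[OF assms]
    by (simp add: loewner_iff_qform[OF hA hS] loewner_iff_qform[OF hS hB])
qed

end
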